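(* Let $V=(J,(V_j)_{j\in J},d,H)$ be a hypergraph system, let $(\nu_e)_{e\in H}$ be a pseudorandom system of measures on $V$, and let $e\in H$. Let $K$ be a finite set and for each $k\in K$ let $f_k:V_e\to\mathbb{R}$ satisfy $|f_k(x_e)|\le\nu_e(x_e)+1$ for all $x_e\in V_e$. Then $$\Big|\mathbb{E}\Big((\nu_e(x_e)-1)\prod_{k\in K}\mathcal{D}_ef_k(x_e)\ \Big|\ x_e\in V_e\Big)\Big|=o_{N\to\infty;K}(1),$$ where the $o$-term depends only on $|K|$ (and $J$ and the pseudorandomness constants), not on the functions $f_k$.
   Context: A hypergraph system is a quadruple $V=(J,(V_j)_{j\in J},d,H)$ where $J$ is a finite set, each $V_j$ is a finite nonempty set, $d\ge1$ is an integer and $H\subseteq\binom{J}{d}:=\{e\subseteq J:|e|=d\}$; for $e\subseteq J$ put $V_e:=\prod_{j\in e}V_j$. For a finite nonempty set $Z$ and $f:Z\to\mathbb{R}$, $\mathbb{E}(f(x)\mid x\in Z):=|Z|^{-1}\sum_{x\in Z}f(x)$; constraints written after the bar mean uniform averaging over all tuples satisfying them. All objects depend on a parameter $N$ ranging over a sequence tending to infinity while $J,d,H$ are fixed; implicit constants may depend on $J$. $o_{x\to0;y}(X)$ denotes a quantity bounded in magnitude by $c(x,y)X$ where $c(x,y)\to0$ as $x\to0$ for each fixed $y$; $O_y(X)$ a quantity bounded by $C(y)X$. Cube notation: for a finite set $e$, $\{0,1\}^e$ is the set of tuples $\omega=(\omega_j)_{j\in e}$ with $\omega_j\in\{0,1\}$,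 and $0^e$ is the all-zero tuple; for $x^{(0)}_J,x^{(1)}_J\in V_J$, $e\subseteq J$ and $\omega\in\{0,1\}^e$, set $x^{(\omega)}_e:=(x^{(\omega_j)}_j)_{j\in e}\in V_e$ and $x^{(a)}_e:=(x^{(a)}_j)_{j\in e}$ for $a\in\{0,1\}$. A system of measures is a family of functions $\nu_e:V_e\to[0,\infty)$, $e\in H$, with $\mathbb{E}(\nu_e(x_e)\mid x_e\in V_e)=1+o_{N\to\infty}(1)$. For $e\in H$ and $f:V_e\to\mathbb{R}$, the dual function is $\mathcal{D}_ef(x^{(0)}_e):=\mathbb{E}\big(\prod_{\omega\in\{0,1\}^e,\ \omega\neq 0^e}f(x^{(\omega)}_e)\mid x^{(1)}_e\in V_e\big)$. The system is pseudorandom if: (i) $\mathcal{D}_e(\nu_e+1)(x_e)=O(1)$ for all $e\in H$, $x_e\in V_e$; (ii) for every choice of exponents $n_{e,\omega}\in\{0,1\}$, $\mathbb{E}\big(\prod_{e\in H}\prod_{\omega\in\{0,1\}^e}\nu_e(x^{(\omega)}_e)^{n_{e,\omega}}\mid x^{(0)}_J,x^{(1)}_J\in V_J\big)=1+o_{N\to\infty}(1)$; (iii) for every $e\in H$, $j\in e$, every choice of $n_{e,\omega}\in\{0,1\}$ and every integer $K\ge0$, $\mathbb{E}\Big(\mathbb{E}\big(\prod_{\omega\in\{0,1\}^e}\nu_e(x^{(\omega)}_e)^{n_{e,\omega}}\mid x^{(0)}_j,x^{(1)}_j\in V_j\big)^K\ \Big|\ x^{(0)}_{e\setminus\{j\}},x^{(1)}_{e\setminus\{j\}}\in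 V_{e\setminus\{j\}}\Big)=O_K(1)$. *)

theory Defs
  imports Complex_Main "HOL-Library.FuncSet"
begin

text \<open>Objects depending on the parameter N are modelled as functions of N :: nat
  (N \<rightarrow> \<infinity> along the filter sequentially). A point of V_e is an element of
  PiE e (V N), i.e. a function on e (undefined outside e). A vertex
  \<omega> of the cube {0,1}^e is represented by the subset S \<subseteq> e of coordinates
  where \<omega>_j = 1.\<close>

definition avg :: "('a \<Rightarrow> real) \<Rightarrow> 'a set \<Rightarrow> real" where
  "avg f Z = (\<Sum>x\<in>Z. f x) / real (card Z)"

definition hypergraph_system ::
  "'j set \<Rightarrow> (nat \<Rightarrow> 'j \<Rightarrow> 'v set) \<Rightarrow> nat \<Rightarrow> 'j set set \<Rightarrow> bool" where
  "hypergraph_system J V d H \<longleftrightarrow>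
     finite J \<and> (\<forall>N. \<forall>j\<in>J. finite (V N j) \<and> V N j \<noteq> {}) \<and> d \<ge> 1 \<and>
     H \<subseteq> {e. e \<subseteq> J \<and> card e = d}"

definition cube_pt :: "'j set \<Rightarrow> ('j \<Rightarrow> 'v) \<Rightarrow> ('j \<Rightarrow> 'v) \<Rightarrow> 'j set \<Rightarrow> ('j \<Rightarrow> 'v)" where
  "cube_pt e x0 x1 S = restrict (\<lambda>j. if j \<in> S then x1 j else x0 j) e"

definition dual_fn ::
  "(nat \<Rightarrow> 'j \<Rightarrow> 'v set) \<Rightarrow> nat \<Rightarrow> 'j set \<Rightarrow> (('j \<Rightarrow> 'v) \<Rightarrow> real) \<Rightarrow> ('j \<Rightarrow> 'v) \<Rightarrow> real" where
  "dual_fn V N e f x0 =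
     avg (\<lambda>x1. \<Prod>S\<in>Pow e - {{}}. f (cube_pt e x0 x1 S)) (PiE e (V N))"

definition system_of_measures ::
  "(nat \<Rightarrow> 'j \<Rightarrow> 'v set) \<Rightarrow> 'j set set \<Rightarrow> (nat \<Rightarrow> 'j set \<Rightarrow> ('j \<Rightarrow> 'v) \<Rightarrow> real) \<Rightarrow> bool" where
  "system_of_measures V H \<nu> \<longleftrightarrow>
     (\<forall>N. \<forall>e\<in>H. \<forall>x\<in>PiE e (V N). \<nu> N e x \<ge> 0) \<and>
     (\<forall>e\<in>H. (\<lambda>N. avg (\<nu> N e) (PiE e (V N))) \<longlonglongrightarrow> 1)"

definition pseudorandom ::
  "'j set \<Rightarrow> (nat \<Rightarrow> 'j \<Rightarrow> 'v set) \<Rightarrow> 'j set set \<Rightarrow> (nat \<Rightarrow> 'j set \<Rightarrow> ('j \<Rightarrow> 'v) \<Rightarrow> real) \<Rightarrow> bool" where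
  "pseudorandom J V H \<nu> \<longleftrightarrow>
     system_of_measures V H \<nu> \<and>
     \<comment> \<open>(i)\<close>
     (\<exists>C. \<forall>\<^sub>F N in sequentially. \<forall>e\<in>H. \<forall>x\<in>PiE e (V N).
          \<bar>dual_fn V N e (\<lambda>y. \<nu> N e y + 1) x\<bar> \<le> C) \<and>
     \<comment> \<open>(ii)\<close>
     (\<forall>n :: 'j set \<Rightarrow> 'j set \<Rightarrow> bool.
        (\<lambda>N. avg (\<lambda>(x0, x1). \<Prod>e\<in>H. \<Prod>S\<in>Pow e.
                    (if n e S then \<nu> N e (cube_pt e x0 x1 S) else 1))
                 (PiE J (V N) \<times> PiE J (V N))) \<longlonglongrightarrow> 1) \<and>
     \<comment> \<open>(iii)\<close>
     (\<forall>e\<in>H. \<forall>j\<in>e. \<forall>n :: 'j set \<Rightarrow> bool. \<forall>K :: nat.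
        \<exists>C. \<forall>\<^sub>F N in sequentially.
          \<bar>avg (\<lambda>(x0, x1).
              (avg (\<lambda>(y0, y1). \<Prod>S\<in>Pow e.
                    (if n S then \<nu> N e (cube_pt e (x0(j := y0)) (x1(j := y1)) S) else 1))
                 (V N j \<times> V N j)) ^ K)
             (PiE (e - {j}) (V N) \<times> PiE (e - {j}) (V N))\<bar> \<le> C)"

end

theory Submission
  imports Defs "HOL-Analysis.Convex"
begin

(* The correlation is the value T(\<emptyset>) of a family T(P), P \<subseteq> e, of averages over "stacked"
   configurations: every coordinate j \<in> e carries a base point x0_j, a second point x1_j and one
   point y_kj for each dual function D f_k. Coordinates in P have already been doubled, i.e. the
   product runs over the cube vertices \<omega> \<subseteq> P, while the coordinates outside P still feed the dual
   functions. Cauchy-Schwarz in one coordinate i \<notin> P gives T(P)^2 \<le> w_i(P) T(P \<union> {i}), where the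
   weight w_i(P) is the second moment of the factors involving the dual variables at i. Since
   |f_k| \<le> \<nu> + 1, expanding the product of the factors \<nu> + 1 bounds w_i(P) by the moments of
   condition (iii), uniformly in the f_k. After |e| = d steps |T(\<emptyset>)|^(2^d) \<le> C^(2^d) |T(e)|, and
   T(e) is the cube average of \<nu> - 1 over {0,1}^e, which tends to 0: expanding the product
   of the factors \<nu> - 1 turns it into an alternating sum of averages that tend to 1 by (ii). *)

section \<open>Uniform averages\<close>

lemma avg_cong: "(\<And>x. x \<in> A \<Longrightarrow> f x = g x) \<Longrightarrow> avg f A = avg g A"
  unfolding avg_def by (metis sum.cong)

lemma avg_const: "finite A \<Longrightarrow> A \<noteq> {} \<Longrightarrow> avg (\<lambda>_. c) A = c"
  unfolding avg_def by simp

lemma avg_mult_left: "avg (\<lambda>x. c * f x) A = c * avg f A"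
  unfolding avg_def by (simp add: sum_distrib_left)

lemma avg_mult_right: "avg (\<lambda>x. f x * c) A = avg f A * c"
  unfolding avg_def by (simp add: sum_distrib_right)

lemma avg_add: "avg (\<lambda>x. f x + g x) A = avg f A + avg g A"
  unfolding avg_def by (simp add: sum.distrib add_divide_distrib)

lemma avg_sum: "avg (\<lambda>x. \<Sum>n\<in>S. F n x) A = (\<Sum>n\<in>S. avg (F n) A)"
  unfolding avg_def by (simp add: sum.swap[of _ S] sum_divide_distrib)

lemma avg_mono: "(\<And>x. x \<in> A \<Longrightarrow> f x \<le> g x) \<Longrightarrow> avg f A \<le> avg g A"
  unfolding avg_def by (intro divide_right_mono sum_mono) auto

lemma avg_nonneg: "(\<And>x. x \<in> A \<Longrightarrow> 0 \<le> f x) \<Longrightarrow> 0 \<le> avg f A"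
  unfolding avg_def by (intro divide_nonneg_nonneg sum_nonneg) auto

lemma abs_avg_le: "\<bar>avg f A\<bar> \<le> avg (\<lambda>x. \<bar>f x\<bar>) A"
  unfolding avg_def by (simp add: sum_abs divide_right_mono)

lemma avg_Cauchy_Schwarz:
  "(avg (\<lambda>x. f x * g x) A)\<^sup>2 \<le> avg (\<lambda>x. (f x)\<^sup>2) A * avg (\<lambda>x. (g x)\<^sup>2) A"
proof -
  have "(\<Sum>x\<in>A. f x * g x)\<^sup>2 \<le> (\<Sum>x\<in>A. (f x)\<^sup>2) * (\<Sum>x\<in>A. (g x)\<^sup>2)"
    by (rule Cauchy_Schwarz_ineq_sum)
  then show ?thesis
    unfolding avg_def by (simp add: power_divide divide_right_mono power2_eq_square)
qed

lemma avg_image: "inj_on h S \<Longrightarrow> avg F (h ` S) = avg (\<lambda>x. F (h x)) S"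
  unfolding avg_def by (simp add: sum.reindex card_image)

lemma avg_reindex: "bij_betw h A B \<Longrightarrow> avg (\<lambda>x. F (h x)) A = avg F B"
  unfolding avg_def by (simp add: sum.reindex_bij_betw bij_betw_same_card)

lemma avg_Times:
  assumes "finite A" "finite B"
  shows "avg F (A \<times> B) = avg (\<lambda>a. avg (\<lambda>b. F (a, b)) B) A"
proof (cases "B = {}")
  case False
  then have "card B > 0" using assms by auto
  then show ?thesis using assms unfolding avg_def
    by (simp add: sum.cartesian_product card_cartesian_product sum_divide_distrib[symmetric]
        field_simps)
qed (simp add: avg_def)

lemma avg_swap:
  assumes "finite A" "finite B"
  shows "avg (\<lambda>a. avg (\<lambda>b. F a b) B) A = avg (\<lambda>b. avg (\<lambda>a. F a b) A) B"
  unfolding avg_def by (simp add: sum_divide_distrib[symmetric] sum.swap[of _ A])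

lemma prod_avg_PiE:
  assumes "finite K" "finite A"
  shows "(\<Prod>k\<in>K. avg (h k) A) = avg (\<lambda>Y. \<Prod>k\<in>K. h k (Y k)) (PiE K (\<lambda>_. A))"
  using assms unfolding avg_def by (simp add: prod_dividef prod_sum_PiE card_PiE)

lemma avg_PiE_insert:
  assumes "i \<notin> A"
  shows "avg F (PiE (insert i A) W) = avg (\<lambda>(c, g). F (g(i := c))) (W i \<times> PiE A W)"
proof -
  have "avg F (PiE (insert i A) W) = avg F ((\<lambda>(y, g). g(i := y)) ` (W i \<times> PiE A W))"
    by (simp add: PiE_insert_eq)
  also have "\<dots> = avg (\<lambda>x. F ((\<lambda>(y, g). g(i := y)) x)) (W i \<times> PiE A W)"
    by (rule avg_image[OF inj_combinator[OF assms]])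
  finally show ?thesis by (simp add: case_prod_unfold)
qed

lemma avg_PiE_coordinate:
  assumes "k \<in> K" "finite K" "finite A"
  shows "avg (\<lambda>b. G (b k)) (PiE K (\<lambda>_. A)) = avg G A"
proof -
  have KK: "K = insert k (K - {k})" using assms by auto
  have f: "finite (PiE (K - {k}) (\<lambda>_. A))" using assms by (auto intro!: finite_PiE)
  have "avg (\<lambda>b. G (b k)) (PiE K (\<lambda>_. A)) = avg (\<lambda>b. G (b k)) (PiE (insert k (K - {k})) (\<lambda>_. A))"
    using KK by simp
  also have "\<dots> = avg (\<lambda>(y, g). G ((g(k := y)) k)) (A \<times> PiE (K - {k}) (\<lambda>_. A))"
    by (rule avg_PiE_insert) simp
  also have "\<dots> = avg (\<lambda>y. avg (\<lambda>g. G y) (PiE (K - {k}) (\<lambda>_. A))) A"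
    by (subst avg_Times[OF assms(3) f]) simp
  also have "\<dots> = avg G A"
  proof (cases "A = {}")
    case True then show ?thesis by (simp add: avg_def)
  next
    case False
    then have "PiE (K - {k}) (\<lambda>_. A) \<noteq> {}" by (simp add: PiE_eq_empty_iff)
    then show ?thesis using f by (simp add: avg_const)
  qed
  finally show ?thesis .
qed

lemma avg_PiE_remove:
  assumes "i \<in> A" "finite A" "\<And>j. j \<in> A \<Longrightarrow> finite (W j) \<and> W j \<noteq> {}"
  shows "avg (\<lambda>x. F (restrict x (A - {i}))) (PiE A W) = avg F (PiE (A - {i}) W)"
proof -
  have A: "A = insert i (A - {i})" using assms by auto
  have "avg (\<lambda>x. F (restrict x (A - {i}))) (PiE A W)
      = avg (\<lambda>x. F (restrict x (A - {i}))) (PiE (insert i (A - {i})) W)"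
    using A by simp
  also have "\<dots> = avg (\<lambda>(c, g). F (restrict (g(i := c)) (A - {i}))) (W i \<times> PiE (A - {i}) W)"
    by (rule avg_PiE_insert) simp
  also have "\<dots> = avg (\<lambda>(c, g). F g) (W i \<times> PiE (A - {i}) W)"
  proof (rule avg_cong)
    fix x assume "x \<in> W i \<times> PiE (A - {i}) W"
    then obtain c g where x: "x = (c, g)" and g: "g \<in> PiE (A - {i}) W" by auto
    have "restrict (g(i := c)) (A - {i}) = restrict g (A - {i})"
      by (auto simp: restrict_def)
    also have "\<dots> = g" using g by simp
    finally show "(case x of (c, g) \<Rightarrow> F (restrict (g(i := c)) (A - {i}))) = (case x of (c, g) \<Rightarrow> F g)"
      using x by simp
  qed
  also have "\<dots> = avg (\<lambda>c. avg F (PiE (A - {i}) W)) (W i)"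
    using assms by (subst avg_Times) (auto intro!: finite_PiE)
  also have "\<dots> = avg F (PiE (A - {i}) W)"
    using assms by (intro avg_const) auto
  finally show ?thesis .
qed

lemma avg_PiE_resample:
  assumes "i \<in> A" "finite A" "\<And>j. j \<in> A \<Longrightarrow> finite (W j) \<and> W j \<noteq> {}"
  shows "avg F (PiE A W) = avg (\<lambda>Z. avg (\<lambda>c. F (Z(i := c))) (W i)) (PiE A W)"
proof -
  have fin: "finite (PiE (A - {i}) W)" using assms by (auto intro!: finite_PiE)
  have fi: "finite (W i)" using assms by auto
  have A: "A = insert i (A - {i})" using assms by auto
  have "avg (\<lambda>Z. avg (\<lambda>c. F (Z(i := c))) (W i)) (PiE A W)
     = avg (\<lambda>Z. (\<lambda>g. avg (\<lambda>c. F (g(i := c))) (W i)) (restrict Z (A - {i}))) (PiE A W)"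
  proof (rule avg_cong)
    fix Z assume Z: "Z \<in> PiE A W"
    have "\<And>c. Z(i := c) = (restrict Z (A - {i}))(i := c)"
      using Z by (auto simp: restrict_def PiE_def extensional_def fun_eq_iff)
    then show "avg (\<lambda>c. F (Z(i := c))) (W i) = (\<lambda>g. avg (\<lambda>c. F (g(i := c))) (W i)) (restrict Z (A - {i}))"
      by simp
  qed
  also have "\<dots> = avg (\<lambda>g. avg (\<lambda>c. F (g(i := c))) (W i)) (PiE (A - {i}) W)"
    by (rule avg_PiE_remove[OF assms])
  also have "\<dots> = avg (\<lambda>c. avg (\<lambda>g. F (g(i := c))) (PiE (A - {i}) W)) (W i)"
    by (rule avg_swap[OF fin fi])
  also have "\<dots> = avg (\<lambda>(c, g). F (g(i := c))) (W i \<times> PiE (A - {i}) W)"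
    by (subst avg_Times[OF fi fin]) simp
  also have "\<dots> = avg F (PiE (insert i (A - {i})) W)"
    by (rule avg_PiE_insert[symmetric]) simp
  finally show ?thesis using A by simp
qed

lemma avg_PiE_restrict:
  assumes "finite J" "e \<subseteq> J" "\<And>j. j \<in> J \<Longrightarrow> finite (W j) \<and> W j \<noteq> {}"
  shows "avg (\<lambda>x. F (restrict x e)) (PiE J W) = avg F (PiE e W)"
  using assms
proof (induction "card (J - e)" arbitrary: J)
  case 0
  then have "J = e" by (metis Diff_eq_empty_iff card_0_eq finite_Diff subset_antisym)
  show ?case unfolding \<open>J = e\<close> by (rule avg_cong) simp
next
  case (Suc n)
  have "J - e \<noteq> {}" using Suc.hyps(2) by (metis card.empty nat.distinct(1))
  then obtain a where a: "a \<in> J" "a \<notin> e" by blast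
  have "(J - {a}) - e = (J - e) - {a}" by blast
  moreover have "card ((J - e) - {a}) = card (J - e) - 1"
    using a Suc.prems(1) by (intro card_Diff_singleton) auto
  ultimately have n: "n = card ((J - {a}) - e)" using Suc.hyps(2) by simp
  have "avg (\<lambda>x. F (restrict x e)) (PiE J W)
      = avg (\<lambda>x. (\<lambda>y. F (restrict y e)) (restrict x (J - {a}))) (PiE J W)"
  proof (rule avg_cong)
    fix x :: "'a \<Rightarrow> 'b"
    have "restrict x e = restrict (restrict x (J - {a})) e"
      using a Suc.prems(2) by (auto simp: restrict_def fun_eq_iff)
    then show "F (restrict x e) = (\<lambda>y. F (restrict y e)) (restrict x (J - {a}))" by simp
  qed
  also have "\<dots> = avg (\<lambda>y. F (restrict y e)) (PiE (J - {a}) W)"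
    by (rule avg_PiE_remove) (use Suc a in auto)
  also have "\<dots> = avg F (PiE e W)"
    by (rule Suc.hyps(1)[OF n]) (use Suc a in auto)
  finally show ?case .
qed

lemma avg_PiE_Times_restrict:
  assumes "finite J" "e \<subseteq> J" "\<And>j. j \<in> J \<Longrightarrow> finite (W j) \<and> W j \<noteq> {}"
  shows "avg (\<lambda>(x0, x1). G (restrict x0 e) (restrict x1 e)) (PiE J W \<times> PiE J W)
       = avg (\<lambda>(x0, x1). G x0 x1) (PiE e W \<times> PiE e W)"
proof -
  have fJ: "finite (PiE J W)" using assms by (auto intro!: finite_PiE)
  have fe: "finite (PiE e W)" using assms by (intro finite_PiE) (auto intro: finite_subset)
  have "avg (\<lambda>(x0, x1). G (restrict x0 e) (restrict x1 e)) (PiE J W \<times> PiE J W)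
      = avg (\<lambda>x0. avg (\<lambda>x1. G (restrict x0 e) (restrict x1 e)) (PiE J W)) (PiE J W)"
    by (simp add: avg_Times[OF fJ fJ])
  also have "\<dots> = avg (\<lambda>x0. (\<lambda>y0. avg (\<lambda>x1. G y0 x1) (PiE e W)) (restrict x0 e)) (PiE J W)"
    by (intro avg_cong avg_PiE_restrict[OF assms])
  also have "\<dots> = avg (\<lambda>y0. avg (\<lambda>x1. G y0 x1) (PiE e W)) (PiE e W)"
    by (rule avg_PiE_restrict[OF assms])
  also have "\<dots> = avg (\<lambda>(x0, x1). G x0 x1) (PiE e W \<times> PiE e W)"
    by (simp add: avg_Times[OF fe fe])
  finally show ?thesis .
qed

lemma avg_PiE_zip:
  shows "avg (\<lambda>u. H (restrict (\<lambda>j. fst (u j)) A) (restrict (\<lambda>j. snd (u j)) A)) (PiE A (\<lambda>j. W j \<times> W j))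
       = avg (\<lambda>(x0, x1). H x0 x1) (PiE A W \<times> PiE A W)"
proof -
  have bij: "bij_betw (\<lambda>(x0, x1). restrict (\<lambda>j. (x0 j, x1 j)) A) (PiE A W \<times> PiE A W) (PiE A (\<lambda>j. W j \<times> W j))"
    by (rule bij_betw_byWitness[where f'="\<lambda>u. (restrict (\<lambda>j. fst (u j)) A, restrict (\<lambda>j. snd (u j)) A)"])
       (auto simp: PiE_iff extensional_def restrict_def fun_eq_iff mem_Times_iff)
  have "avg (\<lambda>(x0, x1). H x0 x1) (PiE A W \<times> PiE A W)
      = avg (\<lambda>p. (\<lambda>u. H (restrict (\<lambda>j. fst (u j)) A) (restrict (\<lambda>j. snd (u j)) A)) ((\<lambda>(x0, x1). restrict (\<lambda>j. (x0 j, x1 j)) A) p)) (PiE A W \<times> PiE A W)"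
  proof (rule avg_cong)
    fix p assume p: "p \<in> PiE A W \<times> PiE A W"
    obtain a b where ab: "p = (a, b)" by force
    have "restrict (\<lambda>j. fst (restrict (\<lambda>j. (a j, b j)) A j)) A = a"
         "restrict (\<lambda>j. snd (restrict (\<lambda>j. (a j, b j)) A j)) A = b"
      using p ab by (auto simp: PiE_iff extensional_def restrict_def fun_eq_iff)
    then show "(case p of (x0, x1) \<Rightarrow> H x0 x1) = (\<lambda>u. H (restrict (\<lambda>j. fst (u j)) A) (restrict (\<lambda>j. snd (u j)) A)) ((\<lambda>(x0, x1). restrict (\<lambda>j. (x0 j, x1 j)) A) p)"
      using ab by simp
  qed
  also have "\<dots> = avg (\<lambda>u. H (restrict (\<lambda>j. fst (u j)) A) (restrict (\<lambda>j. snd (u j)) A)) (PiE A (\<lambda>j. W j \<times> W j))"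
    by (rule avg_reindex[OF bij])
  finally show ?thesis by simp
qed

lemma avg_PiE_map:
  assumes "finite A"
    and "\<And>j G. j \<in> A \<Longrightarrow> avg (\<lambda>c. G (\<pi> j c)) (L j) = avg G (U j)"
    and "\<And>j. j \<in> A \<Longrightarrow> finite (L j) \<and> finite (U j)"
  shows "avg (\<lambda>Z. H (restrict (\<lambda>j. \<pi> j (Z j)) A)) (PiE A L) = avg H (PiE A U)"
  using assms
proof (induction A arbitrary: H rule: finite_induct)
  case empty
  then show ?case by (simp add: avg_def)
next
  case (insert a A)
  have fL: "finite (PiE A L)" and fU: "finite (PiE A U)" and fLa: "finite (L a)" and fUa: "finite (U a)"
    using insert.prems(2) insert.hyps(1) by (auto intro!: finite_PiE)
  have "avg (\<lambda>Z. H (restrict (\<lambda>j. \<pi> j (Z j)) (insert a A))) (PiE (insert a A) L)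
      = avg (\<lambda>(c, Z). H (restrict (\<lambda>j. \<pi> j ((Z(a := c)) j)) (insert a A))) (L a \<times> PiE A L)"
    by (rule avg_PiE_insert) (rule insert.hyps)
  also have "\<dots> = avg (\<lambda>(c, Z). H ((restrict (\<lambda>j. \<pi> j (Z j)) A)(a := \<pi> a c))) (L a \<times> PiE A L)"
  proof (rule avg_cong)
    fix x assume "x \<in> L a \<times> PiE A L"
    have "restrict (\<lambda>j. \<pi> j (((snd x)(a := fst x)) j)) (insert a A) = (restrict (\<lambda>j. \<pi> j (snd x j)) A)(a := \<pi> a (fst x))"
      using insert.hyps by (auto simp: restrict_def fun_eq_iff)
    then show "(case x of (c, Z) \<Rightarrow> H (restrict (\<lambda>j. \<pi> j ((Z(a := c)) j)) (insert a A))) =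
          (case x of (c, Z) \<Rightarrow> H ((restrict (\<lambda>j. \<pi> j (Z j)) A)(a := \<pi> a c)))"
      by (simp add: case_prod_unfold)
  qed
  also have "\<dots> = avg (\<lambda>c. avg (\<lambda>Z. H ((restrict (\<lambda>j. \<pi> j (Z j)) A)(a := \<pi> a c))) (PiE A L)) (L a)"
    by (subst avg_Times[OF fLa fL]) simp
  also have "\<dots> = avg (\<lambda>Z. avg (\<lambda>c. H ((restrict (\<lambda>j. \<pi> j (Z j)) A)(a := \<pi> a c))) (L a)) (PiE A L)"
    by (rule avg_swap[OF fLa fL])
  also have "\<dots> = avg (\<lambda>Z. avg (\<lambda>u. H ((restrict (\<lambda>j. \<pi> j (Z j)) A)(a := u))) (U a)) (PiE A L)"
    by (intro avg_cong) (rule insert.prems(1)[of a, where G="\<lambda>u. H (_ (a := u))"], simp)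
  also have "\<dots> = avg (\<lambda>u. avg (\<lambda>Z. H ((restrict (\<lambda>j. \<pi> j (Z j)) A)(a := u))) (PiE A L)) (U a)"
    by (rule avg_swap[OF fL fUa])
  also have "\<dots> = avg (\<lambda>u. avg (\<lambda>g. H (g(a := u))) (PiE A U)) (U a)"
    by (intro avg_cong insert.IH) (use insert.prems in auto)
  also have "\<dots> = avg (\<lambda>(u, g). H (g(a := u))) (U a \<times> PiE A U)"
    by (subst avg_Times[OF fUa fU]) simp
  also have "\<dots> = avg H (PiE (insert a A) U)"
    by (rule avg_PiE_insert[symmetric]) (rule insert.hyps)
  finally show ?case .
qed

lemma prod_plus_one_expand:
  fixes a :: "'a \<Rightarrow> 'b::comm_semiring_1"
  assumes "finite U" "T \<subseteq> U"
  shows "(\<Prod>t\<in>T. a t + 1) = (\<Sum>nn\<in>Pow T. \<Prod>t\<in>U. if t \<in> nn then a t else 1)"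
proof -
  have "(\<Prod>t\<in>T. a t + 1) = (\<Sum>nn\<in>Pow T. (\<Prod>t\<in>nn. a t) * (\<Prod>t\<in>T - nn. 1))"
    using assms finite_subset by (intro prod_add) blast
  also have "\<dots> = (\<Sum>nn\<in>Pow T. \<Prod>t\<in>U. if t \<in> nn then a t else 1)"
  proof (rule sum.cong)
    fix nn assume "nn \<in> Pow T"
    then have "U \<inter> nn = nn" using assms(2) by auto
    then show "(\<Prod>t\<in>nn. a t) * (\<Prod>t\<in>T - nn. 1) = (\<Prod>t\<in>U. if t \<in> nn then a t else 1)"
      using prod.inter_restrict[OF assms(1), of a nn] by simp
  qed simp
  finally show ?thesis .
qed

lemma prod_minus_one_expand:
  fixes a :: "'a \<Rightarrow> 'b::comm_ring_1"
  assumes "finite T"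
  shows "(\<Prod>t\<in>T. a t - 1) = (\<Sum>nn\<in>Pow T. (-1) ^ card (T - nn) * (\<Prod>t\<in>T. if t \<in> nn then a t else 1))"
proof -
  have "(\<Prod>t\<in>T. a t - 1) = (\<Prod>t\<in>T. a t + (-1))" by simp
  also have "\<dots> = (\<Sum>nn\<in>Pow T. (\<Prod>t\<in>nn. a t) * (\<Prod>t\<in>T - nn. -1))"
    by (rule prod_add[OF assms])
  also have "\<dots> = (\<Sum>nn\<in>Pow T. (-1) ^ card (T - nn) * (\<Prod>t\<in>T. if t \<in> nn then a t else 1))"
  proof (rule sum.cong)
    fix nn assume "nn \<in> Pow T"
    then have "T \<inter> nn = nn" by auto
    then show "(\<Prod>t\<in>nn. a t) * (\<Prod>t\<in>T - nn. -1)
        = (-1) ^ card (T - nn) * (\<Prod>t\<in>T. if t \<in> nn then a t else 1)"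
      using prod.inter_restrict[OF assms, of a nn] by (simp add: mult.commute)
  qed simp
  finally show ?thesis .
qed

lemma power_sum_le:
  fixes x :: "'a \<Rightarrow> real"
  assumes "finite S" "S \<noteq> {}" "\<And>s. s \<in> S \<Longrightarrow> 0 \<le> x s"
  shows "(\<Sum>s\<in>S. x s) ^ p \<le> real (card S) ^ p * (\<Sum>s\<in>S. x s ^ p)"
proof -
  obtain s0 where s0: "s0 \<in> S" "\<And>s. s \<in> S \<Longrightarrow> x s \<le> x s0"
    using Max_in[of "x ` S"] Max_ge[of "x ` S"] assms(1,2) by fastforce
  have "(\<Sum>s\<in>S. x s) ^ p \<le> (real (card S) * x s0) ^ p"
    using sum_bounded_above[of S x "x s0"] s0 assms by (intro power_mono sum_nonneg) auto
  also have "\<dots> \<le> real (card S) ^ p * (\<Sum>s\<in>S. x s ^ p)"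
    unfolding power_mult_distrib using s0 assms
    by (intro mult_left_mono member_le_sum) auto
  finally show ?thesis .
qed

lemma prod_power2_le:
  fixes x :: "'a \<Rightarrow> real"
  assumes "finite K" "\<And>k. k \<in> K \<Longrightarrow> 0 \<le> x k"
  shows "(\<Prod>k\<in>K. (x k)\<^sup>2) \<le> 1 + (\<Sum>k\<in>K. x k ^ (2 * card K))"
proof (cases "K = {}")
  case False
  obtain k0 where k0: "k0 \<in> K" "\<And>k. k \<in> K \<Longrightarrow> x k \<le> x k0"
    using Max_in[of "x ` K"] Max_ge[of "x ` K"] assms(1) False by fastforce
  have "(\<Prod>k\<in>K. (x k)\<^sup>2) \<le> (\<Prod>k\<in>K. (x k0)\<^sup>2)"
    using assms k0 by (intro prod_mono conjI power_mono) auto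
  also have "\<dots> = x k0 ^ (2 * card K)" by (simp add: power_mult)
  also have "\<dots> \<le> (\<Sum>k\<in>K. x k ^ (2 * card K))"
    using assms k0 by (intro member_le_sum) auto
  finally show ?thesis by simp
qed simp

lemma prod_Pow_Un:
  assumes "P \<subseteq> e" "i \<notin> P"
  shows "(\<Prod>\<omega>\<in>Pow P. \<Prod>S\<in>{S\<in>Pow (e - P). i \<in> S}. F (\<omega> \<union> S)) = (\<Prod>T\<in>{T\<in>Pow e. i \<in> T}. F T)"
proof -
  have "(\<Prod>\<omega>\<in>Pow P. \<Prod>S\<in>{S\<in>Pow (e - P). i \<in> S}. F (\<omega> \<union> S))
      = (\<Prod>z\<in>Pow P \<times> {S\<in>Pow (e - P). i \<in> S}. F (fst z \<union> snd z))"
    by (subst prod.cartesian_product) (simp add: case_prod_unfold)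
  also have "\<dots> = (\<Prod>T\<in>{T\<in>Pow e. i \<in> T}. F T)"
    by (rule prod.reindex_bij_witness[where i="\<lambda>T. (T \<inter> P, T - P)" and j="\<lambda>z. fst z \<union> snd z"])
       (use assms in auto)
  finally show ?thesis .
qed

text \<open>The inner average of condition (iii), with the exponents n_{e,\<omega>} given by the set nn of
  vertices \<omega> where the exponent is 1.\<close>

definition fibre_avg ::
  "('j \<Rightarrow> 'v set) \<Rightarrow> (('j \<Rightarrow> 'v) \<Rightarrow> real) \<Rightarrow> 'j set \<Rightarrow> 'j \<Rightarrow> 'j set set \<Rightarrow> ('j \<Rightarrow> 'v) \<Rightarrow> ('j \<Rightarrow> 'v) \<Rightarrow> real"
where
  "fibre_avg W \<nu> e i nn x0 x1 = avg (\<lambda>(y0, y1). \<Prod>S\<in>Pow e.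
     (if S \<in> nn then \<nu> (cube_pt e (x0(i := y0)) (x1(i := y1)) S) else 1)) (W i \<times> W i)"

lemma cube_pt_upd_in:
  "x0 \<in> PiE (e - {i}) W \<Longrightarrow> x1 \<in> PiE (e - {i}) W \<Longrightarrow> y0 \<in> W i \<Longrightarrow> y1 \<in> W i
    \<Longrightarrow> cube_pt e (x0(i := y0)) (x1(i := y1)) S \<in> PiE e W"
  unfolding cube_pt_def by (auto simp: PiE_iff)

lemma fibre_avg_nonneg:
  assumes "x0 \<in> PiE (e - {i}) W" "x1 \<in> PiE (e - {i}) W" "\<And>x. x \<in> PiE e W \<Longrightarrow> 0 \<le> \<nu> x"
  shows "0 \<le> fibre_avg W \<nu> e i nn x0 x1"
  unfolding fibre_avg_def
  by (intro avg_nonneg) (auto intro!: prod_nonneg assms(3) cube_pt_upd_in[OF assms(1,2)])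

section \<open>Stacked configurations\<close>

text \<open>A stack over coordinate j is a triple (x0_j, x1_j, y_j) of a base point, a second point and
  one point y_j k for every dual function f_k; the layers Base, Twin and Dual k select one of its
  entries.\<close>

datatype 'k layer = Base | Twin | Dual 'k

fun layer_val :: "'v \<times> 'v \<times> ('k \<Rightarrow> 'v) \<Rightarrow> 'k layer \<Rightarrow> 'v" where
  "layer_val c Base = fst c"
| "layer_val c Twin = fst (snd c)"
| "layer_val c (Dual k) = snd (snd c) k"

definition layers :: "'j set \<Rightarrow> 'j set \<Rightarrow> 'k layer \<Rightarrow> 'j \<Rightarrow> 'k layer" where
  "layers \<omega> S t = (\<lambda>j. if j \<in> \<omega> then Twin else if j \<in> S then t else Base)"

locale stacked_cube =
  fixes e :: "'j set" and K :: "'k set" and W :: "'j \<Rightarrow> 'v set"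
  assumes finite_e: "finite e" and finite_K: "finite K"
    and finite_W: "\<And>j. j \<in> e \<Longrightarrow> finite (W j)" and nonempty_W: "\<And>j. j \<in> e \<Longrightarrow> W j \<noteq> {}"
begin

definition stack :: "'j \<Rightarrow> ('v \<times> 'v \<times> ('k \<Rightarrow> 'v)) set" where
  "stack j = W j \<times> W j \<times> PiE K (\<lambda>_. W j)"

definition stack_point :: "('j \<Rightarrow> 'v \<times> 'v \<times> ('k \<Rightarrow> 'v)) \<Rightarrow> ('j \<Rightarrow> 'k layer) \<Rightarrow> 'j \<Rightarrow> 'v" where
  "stack_point Z \<sigma> = restrict (\<lambda>j. layer_val (Z j) (\<sigma> j)) e"

definition const_stack :: "'v \<Rightarrow> 'v \<times> 'v \<times> ('k \<Rightarrow> 'v)" where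
  "const_stack a = (a, a, restrict (\<lambda>_. a) K)"

text \<open>mixed_avg g f P is the average T(P) of the proof idea: for P = {} the only factor is g x0
  times the integrands of the dual functions D f_k at x0, and moving a coordinate into P doubles
  the product.\<close>

definition mixed_factor ::
  "(('j \<Rightarrow> 'v) \<Rightarrow> real) \<Rightarrow> ('k \<Rightarrow> ('j \<Rightarrow> 'v) \<Rightarrow> real) \<Rightarrow> 'j set \<Rightarrow> 'j set
     \<Rightarrow> ('j \<Rightarrow> 'v \<times> 'v \<times> ('k \<Rightarrow> 'v)) \<Rightarrow> real" where
  "mixed_factor g f P \<omega> Z = g (stack_point Z (layers \<omega> {} Base)) *
      (\<Prod>k\<in>K. \<Prod>S\<in>Pow (e - P) - {{}}. f k (stack_point Z (layers \<omega> S (Dual k))))"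

definition mixed_product where
  "mixed_product g f P Z = (\<Prod>\<omega>\<in>Pow P. mixed_factor g f P \<omega> Z)"

definition mixed_avg where
  "mixed_avg g f P = avg (mixed_product g f P) (PiE e stack)"

definition mixed_half where
  "mixed_half g f P i Z = (\<Prod>\<omega>\<in>Pow P. mixed_factor g f (insert i P) \<omega> Z)"

definition dual_part where
  "dual_part f P i Z =
     (\<Prod>\<omega>\<in>Pow P. \<Prod>k\<in>K. \<Prod>S\<in>{S\<in>Pow (e - P). i \<in> S}. f k (stack_point Z (layers \<omega> S (Dual k))))"

definition dual_weight where
  "dual_weight f P i = avg (\<lambda>Z. (avg (\<lambda>c. dual_part f P i (Z(i := c))) (stack i))\<^sup>2) (PiE e stack)"

lemma finite_stack: "j \<in> e \<Longrightarrow> finite (stack j)"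
  and stack_nonempty: "j \<in> e \<Longrightarrow> stack j \<noteq> {}"
  using finite_K finite_W nonempty_W by (auto simp: stack_def PiE_eq_empty_iff intro!: finite_PiE)

lemma finite_PiE_stack: "finite (PiE e stack)"
  and PiE_stack_nonempty: "PiE e stack \<noteq> {}"
  using finite_e finite_stack stack_nonempty by (auto simp: PiE_eq_empty_iff intro!: finite_PiE)

lemma finite_PiE_W: "finite (PiE e W)"
  and PiE_W_nonempty: "PiE e W \<noteq> {}"
  using finite_e finite_W nonempty_W by (auto simp: PiE_eq_empty_iff intro!: finite_PiE)

lemma finite_PiE_dual: "j \<in> e \<Longrightarrow> finite (PiE K (\<lambda>_. W j))"
  and PiE_dual_nonempty: "j \<in> e \<Longrightarrow> PiE K (\<lambda>_. W j) \<noteq> {}"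
  using finite_K finite_W nonempty_W by (auto simp: PiE_eq_empty_iff intro!: finite_PiE)

subsection \<open>The Cauchy-Schwarz step\<close>

lemma avg_stack_Base_Dual:
  assumes "i \<in> e"
  shows "avg (\<lambda>c. F (fst c) * G (snd (snd c))) (stack i) = avg F (W i) * avg G (PiE K (\<lambda>_. W i))"
proof -
  have fin: "finite (W i)" "W i \<noteq> {}" "finite (PiE K (\<lambda>_. W i))" "PiE K (\<lambda>_. W i) \<noteq> {}"
    using assms finite_W nonempty_W finite_PiE_dual PiE_dual_nonempty by auto
  then have "avg (\<lambda>c. F (fst c) * G (snd (snd c))) (stack i)
      = avg (\<lambda>a. F a * avg G (PiE K (\<lambda>_. W i))) (W i)"
    unfolding stack_def
    by (simp add: avg_Times avg_mult_left avg_const)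
  then show ?thesis by (simp add: avg_mult_right)
qed

lemma avg_stack_Base_Twin:
  assumes "i \<in> e"
  shows "avg (\<lambda>c. F (fst c) * F (fst (snd c))) (stack i) = (avg F (W i))\<^sup>2"
proof -
  have fin: "finite (W i)" "finite (PiE K (\<lambda>_. W i))" "PiE K (\<lambda>_. W i) \<noteq> {}"
    using assms finite_W nonempty_W finite_PiE_dual PiE_dual_nonempty by auto
  then have "avg (\<lambda>c. F (fst c) * F (fst (snd c))) (stack i) = avg (\<lambda>a. F a * avg F (W i)) (W i)"
    unfolding stack_def by (simp add: avg_Times avg_mult_left avg_const)
  then show ?thesis by (simp add: avg_mult_right power2_eq_square)
qed

lemma stack_point_upd_cong:
  "layer_val c (\<sigma> i) = layer_val c' (\<sigma> i) \<Longrightarrow> stack_point (Z(i := c)) \<sigma> = stack_point (Z(i := c')) \<sigma>"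
  unfolding stack_point_def by (auto simp: restrict_def fun_eq_iff)

lemma stack_point_upd_Twin_shift:
  assumes "i \<notin> S" "i \<notin> \<omega>" "fst (snd c) = fst c'"
  shows "stack_point (Z(i := c)) (layers (insert i \<omega>) S t) = stack_point (Z(i := c')) (layers \<omega> S t)"
  using assms unfolding stack_point_def layers_def by (auto simp: restrict_def fun_eq_iff)

lemma mixed_factor_upd_Base:
  assumes "i \<in> P" "i \<notin> \<omega>" "fst c = fst c'"
  shows "mixed_factor g f P \<omega> (Z(i := c)) = mixed_factor g f P \<omega> (Z(i := c'))"
proof -
  have pt: "stack_point (Z(i := c)) (layers \<omega> S t) = stack_point (Z(i := c')) (layers \<omega> S t)"
    if "S \<in> Pow (e - P)" for S t
    using assms that by (intro stack_point_upd_cong) (auto simp: layers_def)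
  show ?thesis
    unfolding mixed_factor_def by (intro arg_cong2[where f="(*)"] prod.cong refl) (auto simp: pt)
qed

lemma mixed_factor_upd_Twin:
  assumes "i \<in> P" "i \<notin> \<omega>" "fst (snd c) = fst c'"
  shows "mixed_factor g f P (insert i \<omega>) (Z(i := c)) = mixed_factor g f P \<omega> (Z(i := c'))"
proof -
  have pt: "stack_point (Z(i := c)) (layers (insert i \<omega>) S t) = stack_point (Z(i := c')) (layers \<omega> S t)"
    if "S \<in> Pow (e - P)" for S t
    using assms that by (intro stack_point_upd_Twin_shift) auto
  show ?thesis
    unfolding mixed_factor_def by (intro arg_cong2[where f="(*)"] prod.cong refl) (auto simp: pt)
qed

lemma dual_part_upd:
  assumes "i \<notin> P" "snd (snd c) = snd (snd c')"
  shows "dual_part f P i (Z(i := c)) = dual_part f P i (Z(i := c'))"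
proof -
  have "stack_point (Z(i := c)) (layers \<omega> S (Dual k)) = stack_point (Z(i := c')) (layers \<omega> S (Dual k))"
    if "\<omega> \<subseteq> P" "i \<in> S" for \<omega> S k
    using assms that by (intro stack_point_upd_cong) (auto simp: layers_def)
  then show ?thesis
    unfolding dual_part_def by (intro prod.cong refl) auto
qed

lemma mixed_product_split:
  "mixed_product g f P Z = dual_part f P i Z * mixed_half g f P i Z"
proof -
  define SS1 where "SS1 = {S\<in>Pow (e - P). i \<in> S}"
  define SS2 where "SS2 = Pow (e - insert i P) - {{}}"
  have SS: "Pow (e - P) - {{}} = SS1 \<union> SS2" "SS1 \<inter> SS2 = {}" "finite SS1" "finite SS2"
    unfolding SS1_def SS2_def using finite_e by auto
  have "mixed_factor g f P \<omega> Z = (\<Prod>k\<in>K. \<Prod>S\<in>SS1. f k (stack_point Z (layers \<omega> S (Dual k))))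
      * mixed_factor g f (insert i P) \<omega> Z" for \<omega>
    unfolding mixed_factor_def SS(1) SS2_def[symmetric]
    by (simp add: prod.union_disjoint[OF SS(3,4,2)] prod.distrib mult_ac)
  then show ?thesis
    unfolding mixed_product_def dual_part_def mixed_half_def SS1_def[symmetric] by (simp add: prod.distrib)
qed

lemma mixed_product_insert_upd:
  assumes "i \<notin> P" "finite P"
  shows "mixed_product g f (insert i P) (Z(i := c))
       = mixed_half g f P i (Z(i := const_stack (fst c)))
         * mixed_half g f P i (Z(i := const_stack (fst (snd c))))"
proof -
  have inj: "inj_on (insert i) (Pow P)"
    using assms(1) by (intro inj_onI) (metis Pow_iff insert_ident subsetD)
  have "mixed_product g f (insert i P) (Z(i := c))
      = (\<Prod>\<omega>\<in>Pow P. mixed_factor g f (insert i P) \<omega> (Z(i := c)))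
        * (\<Prod>\<omega>\<in>Pow P. mixed_factor g f (insert i P) (insert i \<omega>) (Z(i := c)))"
    unfolding mixed_product_def Pow_insert using assms
    by (subst prod.union_disjoint) (auto simp: prod.reindex[OF inj])
  also have "\<dots> = mixed_half g f P i (Z(i := const_stack (fst c)))
        * mixed_half g f P i (Z(i := const_stack (fst (snd c))))"
    unfolding mixed_half_def using assms(1)
    by (intro arg_cong2[where f="(*)"] prod.cong refl mixed_factor_upd_Base mixed_factor_upd_Twin)
       (auto simp: const_stack_def)
  finally show ?thesis .
qed

text \<open>After resampling coordinate i, the integrand of T(P) factors into the dual part, which
  depends only on the dual entries at i, and a half that depends only on the base entry at i; the
  same half, evaluated at both the base and the second entry, makes up T(P \<union> {i}).\<close>

lemma mixed_avg_insert:
  assumes "P \<subseteq> e" "i \<in> e" "i \<notin> P"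
  shows "(mixed_avg g f P)\<^sup>2 \<le> dual_weight f P i * mixed_avg g f (insert i P)"
    and "0 \<le> mixed_avg g f (insert i P)"
proof -
  have resample: "avg F (PiE e stack) = avg (\<lambda>Z. avg (\<lambda>c. F (Z(i := c))) (stack i)) (PiE e stack)" for F
    using assms finite_e finite_stack stack_nonempty by (intro avg_PiE_resample) auto
  define F where "F Z a = mixed_half g f P i (Z(i := const_stack a))" for Z a
  define G where "G Z y = dual_part f P i (Z(i := (undefined, undefined, y)))" for Z y
  define half where "half Z = avg (F Z) (W i)" for Z
  define alpha where "alpha Z = avg (\<lambda>c. dual_part f P i (Z(i := c))) (stack i)" for Z
  have G: "dual_part f P i (Z(i := c)) = G Z (snd (snd c))" for Z c
    unfolding G_def using assms(3) by (rule dual_part_upd) simp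
  have F: "mixed_half g f P i (Z(i := c)) = F Z (fst c)" for Z c
    unfolding F_def mixed_half_def using assms(3)
    by (intro prod.cong refl mixed_factor_upd_Base) (auto simp: const_stack_def)
  have alpha: "alpha Z = avg (G Z) (PiE K (\<lambda>_. W i))" for Z
    using avg_stack_Base_Dual[OF assms(2), of "\<lambda>_. 1" "G Z"] assms(2) finite_W nonempty_W
    by (simp add: alpha_def G avg_const)
  have "mixed_avg g f P = avg (\<lambda>Z. avg (\<lambda>c. F Z (fst c) * G Z (snd (snd c))) (stack i)) (PiE e stack)"
    unfolding mixed_avg_def resample[of "mixed_product g f P"] mixed_product_split[of g f P _ i] F G
    by (simp add: mult.commute)
  also have "\<dots> = avg (\<lambda>Z. alpha Z * half Z) (PiE e stack)"
    by (simp add: avg_stack_Base_Dual[OF assms(2)] alpha half_def mult.commute)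
  finally have T: "mixed_avg g f P = avg (\<lambda>Z. alpha Z * half Z) (PiE e stack)" .
  have "mixed_avg g f (insert i P)
      = avg (\<lambda>Z. avg (\<lambda>c. F Z (fst c) * F Z (fst (snd c))) (stack i)) (PiE e stack)"
    unfolding mixed_avg_def resample[of "mixed_product g f (insert i P)"] F_def
    using assms(3) finite_subset[OF assms(1) finite_e] by (simp add: mixed_product_insert_upd)
  also have "\<dots> = avg (\<lambda>Z. (half Z)\<^sup>2) (PiE e stack)"
    by (simp add: avg_stack_Base_Twin[OF assms(2)] half_def)
  finally have T': "mixed_avg g f (insert i P) = avg (\<lambda>Z. (half Z)\<^sup>2) (PiE e stack)" .
  show "0 \<le> mixed_avg g f (insert i P)"
    unfolding T' by (intro avg_nonneg) simp
  show "(mixed_avg g f P)\<^sup>2 \<le> dual_weight f P i * mixed_avg g f (insert i P)"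
    unfolding T T' dual_weight_def alpha_def[symmetric] by (rule avg_Cauchy_Schwarz)
qed

lemma mixed_avg_power_le:
  assumes "1 \<le> C" and weight: "\<And>P i. P \<subseteq> e \<Longrightarrow> i \<in> e \<Longrightarrow> i \<notin> P \<Longrightarrow> dual_weight f P i \<le> C"
    and "P \<subseteq> e"
  shows "\<bar>mixed_avg g f P\<bar> ^ 2 ^ card (e - P) \<le> C ^ 2 ^ card (e - P) * \<bar>mixed_avg g f e\<bar>"
  using assms(3)
proof (induction "card (e - P)" arbitrary: P)
  case 0
  then have "P = e" using finite_e by (metis Diff_eq_empty_iff card_0_eq finite_Diff subset_antisym)
  then show ?case using assms(1) by (simp add: mult_le_cancel_right1)
next
  case (Suc n)
  then obtain i where i: "i \<in> e" "i \<notin> P" by (metis Diff_iff card.empty ex_in_conv nat.distinct(1))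
  have "e - insert i P = (e - P) - {i}" by blast
  then have n: "n = card (e - insert i P)" using i finite_e Suc.hyps(2) by simp
  have nonneg: "0 \<le> mixed_avg g f (insert i P)"
    by (rule mixed_avg_insert(2)[OF Suc.prems i])
  have "(mixed_avg g f P)\<^sup>2 \<le> dual_weight f P i * mixed_avg g f (insert i P)"
    by (rule mixed_avg_insert(1)[OF Suc.prems i])
  also have "\<dots> \<le> C * mixed_avg g f (insert i P)"
    using weight[OF Suc.prems i] nonneg by (rule mult_right_mono)
  finally have "((mixed_avg g f P)\<^sup>2) ^ 2 ^ n \<le> (C * mixed_avg g f (insert i P)) ^ 2 ^ n"
    by (intro power_mono) auto
  also have "\<dots> = C ^ 2 ^ n * \<bar>mixed_avg g f (insert i P)\<bar> ^ 2 ^ n"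
    using nonneg by (simp add: power_mult_distrib)
  also have "\<dots> \<le> C ^ 2 ^ n * (C ^ 2 ^ n * \<bar>mixed_avg g f e\<bar>)"
    using Suc.hyps(1)[OF n] n Suc.prems i assms(1) by (intro mult_left_mono) auto
  finally have *: "((mixed_avg g f P)\<^sup>2) ^ 2 ^ n \<le> C ^ 2 ^ Suc n * \<bar>mixed_avg g f e\<bar>"
    by (simp add: power_add mult.assoc mult_2)
  have "\<bar>mixed_avg g f P\<bar> ^ 2 ^ Suc n = ((mixed_avg g f P)\<^sup>2) ^ 2 ^ n"
    by (simp add: power_mult[symmetric] mult.commute power_even_abs)
  then show ?case using * Suc.hyps(2) by simp
qed

definition unstack :: "('j \<Rightarrow> 'v) \<times> ('j \<Rightarrow> 'v) \<times> ('k \<Rightarrow> 'j \<Rightarrow> 'v) \<Rightarrow> 'j \<Rightarrow> 'v \<times> 'v \<times> ('k \<Rightarrow> 'v)" where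
  "unstack t = restrict (\<lambda>j. (fst t j, fst (snd t) j, restrict (\<lambda>k. snd (snd t) k j) K)) e"

lemma bij_betw_unstack:
  "bij_betw unstack (PiE e W \<times> PiE e W \<times> PiE K (\<lambda>_. PiE e W)) (PiE e stack)"
proof (rule bij_betw_byWitness[where f'="\<lambda>Z. (restrict (\<lambda>j. fst (Z j)) e, restrict (\<lambda>j. fst (snd (Z j))) e,
        restrict (\<lambda>k. restrict (\<lambda>j. snd (snd (Z j)) k) e) K)"])
  show "\<forall>t\<in>PiE e W \<times> PiE e W \<times> PiE K (\<lambda>_. PiE e W).
    (restrict (\<lambda>j. fst (unstack t j)) e, restrict (\<lambda>j. fst (snd (unstack t j))) e,
        restrict (\<lambda>k. restrict (\<lambda>j. snd (snd (unstack t j)) k) e) K) = t"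
    by (auto simp: unstack_def PiE_iff extensional_def fun_eq_iff)
  show "\<forall>Z\<in>PiE e stack. unstack (restrict (\<lambda>j. fst (Z j)) e, restrict (\<lambda>j. fst (snd (Z j))) e,
      restrict (\<lambda>k. restrict (\<lambda>j. snd (snd (Z j)) k) e) K) = Z"
  proof (intro ballI ext)
    fix Z j assume Z: "Z \<in> PiE e stack"
    show "unstack (restrict (\<lambda>j. fst (Z j)) e, restrict (\<lambda>j. fst (snd (Z j))) e,
        restrict (\<lambda>k. restrict (\<lambda>j. snd (snd (Z j)) k) e) K) j = Z j"
    proof (cases "j \<in> e")
      case True
      then have "restrict (snd (snd (Z j))) K = snd (snd (Z j))"
        using PiE_mem[OF Z True] by (intro PiE_restrict) (auto simp: stack_def)
      then show ?thesis using True by (simp add: unstack_def restrict_def cong: if_cong)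
    qed (simp add: unstack_def PiE_arb[OF Z])
  qed
  show "unstack ` (PiE e W \<times> PiE e W \<times> PiE K (\<lambda>_. PiE e W)) \<subseteq> PiE e stack"
    by (auto simp: unstack_def PiE_iff extensional_def stack_def)
  show "(\<lambda>Z. (restrict (\<lambda>j. fst (Z j)) e, restrict (\<lambda>j. fst (snd (Z j))) e,
        restrict (\<lambda>k. restrict (\<lambda>j. snd (snd (Z j)) k) e) K)) ` PiE e stack \<subseteq> PiE e W \<times> PiE e W \<times> PiE K (\<lambda>_. PiE e W)"
    by (auto simp: PiE_iff extensional_def stack_def mem_Times_iff)
qed

lemma avg_unstack:
  "avg F (PiE e stack) = avg (\<lambda>t. F (unstack t)) (PiE e W \<times> PiE e W \<times> PiE K (\<lambda>_. PiE e W))"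
  by (rule avg_reindex[OF bij_betw_unstack, symmetric])

lemma stack_point_unstack_Base: "x0 \<in> PiE e W \<Longrightarrow> stack_point (unstack (x0, x1, Y)) (layers {} {} Base) = x0"
  by (auto simp: stack_point_def unstack_def layers_def PiE_iff extensional_def fun_eq_iff)

lemma stack_point_unstack_Dual:
  "k \<in> K \<Longrightarrow> stack_point (unstack (x0, x1, Y)) (layers {} S (Dual k)) = cube_pt e x0 (Y k) S"
  by (auto simp: stack_point_def unstack_def layers_def cube_pt_def fun_eq_iff)

lemma stack_point_unstack_cube:
  "stack_point (unstack (x0, x1, Y)) (layers \<omega> {} Base) = cube_pt e x0 x1 \<omega>"
  by (auto simp: stack_point_def unstack_def layers_def cube_pt_def fun_eq_iff)

lemma mixed_avg_empty:
  "mixed_avg g f {}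
     = avg (\<lambda>x. g x * (\<Prod>k\<in>K. avg (\<lambda>x1. \<Prod>S\<in>Pow e - {{}}. f k (cube_pt e x x1 S)) (PiE e W))) (PiE e W)"
proof -
  let ?A = "PiE e W"
  have fin: "finite (PiE K (\<lambda>_. ?A))" "PiE K (\<lambda>_. ?A) \<noteq> {}"
    using finite_K finite_PiE_W PiE_W_nonempty by (auto simp: PiE_eq_empty_iff intro!: finite_PiE)
  define Q where "Q k x0 y = (\<Prod>S\<in>Pow e - {{}}. f k (cube_pt e x0 y S))" for k x0 y
  have "mixed_product g f {} (unstack (x0, x1, Y)) = g x0 * (\<Prod>k\<in>K. Q k x0 (Y k))" if "x0 \<in> ?A" for x0 x1 Y
    unfolding mixed_product_def mixed_factor_def Q_def using that
    by (simp add: stack_point_unstack_Base stack_point_unstack_Dual cong: prod.cong)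
  then have "mixed_avg g f {} = avg (\<lambda>x0. avg (\<lambda>x1. avg (\<lambda>Y. g x0 * (\<Prod>k\<in>K. Q k x0 (Y k)))
      (PiE K (\<lambda>_. ?A))) ?A) ?A"
    unfolding mixed_avg_def avg_unstack using finite_PiE_W fin by (simp add: avg_Times cong: avg_cong)
  also have "\<dots> = avg (\<lambda>x0. g x0 * (\<Prod>k\<in>K. avg (Q k x0) ?A)) ?A"
    using finite_PiE_W PiE_W_nonempty fin
    by (simp add: avg_const avg_mult_left prod_avg_PiE[OF finite_K finite_PiE_W])
  finally show ?thesis unfolding Q_def .
qed

lemma mixed_avg_full:
  "mixed_avg g f e = avg (\<lambda>(x0, x1). \<Prod>\<omega>\<in>Pow e. g (cube_pt e x0 x1 \<omega>)) (PiE e W \<times> PiE e W)"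
proof -
  let ?A = "PiE e W"
  have fin: "finite (PiE K (\<lambda>_. ?A))" "PiE K (\<lambda>_. ?A) \<noteq> {}"
    using finite_K finite_PiE_W PiE_W_nonempty by (auto simp: PiE_eq_empty_iff intro!: finite_PiE)
  have "mixed_product g f e (unstack (x0, x1, Y)) = (\<Prod>\<omega>\<in>Pow e. g (cube_pt e x0 x1 \<omega>))" for x0 x1 Y
    unfolding mixed_product_def mixed_factor_def by (simp add: stack_point_unstack_cube)
  then show ?thesis
    unfolding mixed_avg_def avg_unstack using finite_PiE_W fin by (simp add: avg_Times avg_const)
qed

subsection \<open>Bounding the weights\<close>

definition base_slice :: "'j \<Rightarrow> ('j \<Rightarrow> 'v \<times> 'v \<times> ('k \<Rightarrow> 'v)) \<Rightarrow> 'j \<Rightarrow> 'v" where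
  "base_slice i Z = restrict (\<lambda>j. fst (Z j)) (e - {i})"

definition mixed_slice :: "'j set \<Rightarrow> 'j \<Rightarrow> 'k \<Rightarrow> ('j \<Rightarrow> 'v \<times> 'v \<times> ('k \<Rightarrow> 'v)) \<Rightarrow> 'j \<Rightarrow> 'v" where
  "mixed_slice P i k Z = restrict (\<lambda>j. if j \<in> P then fst (snd (Z j)) else snd (snd (Z j)) k) (e - {i})"

definition dual_majorant ::
  "(('j \<Rightarrow> 'v) \<Rightarrow> real) \<Rightarrow> 'j set \<Rightarrow> 'j \<Rightarrow> ('j \<Rightarrow> 'v \<times> 'v \<times> ('k \<Rightarrow> 'v)) \<Rightarrow> 'k \<Rightarrow> real" where
  "dual_majorant \<nu> P i Z k = avg (\<lambda>y. \<Prod>\<omega>\<in>Pow P. \<Prod>S\<in>{S\<in>Pow (e - P). i \<in> S}.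
     \<nu> (stack_point (Z(i := const_stack y)) (layers \<omega> S (Dual k))) + 1) (W i)"

lemma base_slice_in: "Z \<in> PiE e stack \<Longrightarrow> base_slice i Z \<in> PiE (e - {i}) W"
  unfolding base_slice_def stack_def by (auto simp: PiE_iff)

lemma mixed_slice_in: "Z \<in> PiE e stack \<Longrightarrow> k \<in> K \<Longrightarrow> mixed_slice P i k Z \<in> PiE (e - {i}) W"
  unfolding mixed_slice_def stack_def by (auto simp: PiE_iff)

lemma stack_point_const_stack_in:
  assumes "Z \<in> PiE e stack" "y \<in> W i" "k \<in> K"
  shows "stack_point (Z(i := const_stack y)) (layers \<omega> S (Dual k)) \<in> PiE e W"
proof -
  have "layer_val ((Z(i := const_stack y)) j) (layers \<omega> S (Dual k) j) \<in> W j" if "j \<in> e" for j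
    using assms PiE_mem[OF assms(1) that]
    by (cases "j = i") (auto simp: const_stack_def layers_def stack_def)
  then show ?thesis unfolding stack_point_def by simp
qed

lemma stack_point_const_stack_cube:
  assumes "\<omega> \<subseteq> P" "S \<subseteq> e - P" "i \<in> S" "k \<in> K"
  shows "stack_point (Z(i := const_stack y)) (layers \<omega> S (Dual k))
       = cube_pt e ((base_slice i Z)(i := y0)) ((mixed_slice P i k Z)(i := y)) (\<omega> \<union> S)"
  using assms unfolding stack_point_def cube_pt_def layers_def base_slice_def mixed_slice_def const_stack_def
  by (auto simp: restrict_def fun_eq_iff)

lemma dual_majorant_nonneg:
  assumes "Z \<in> PiE e stack" "k \<in> K" "\<And>x. x \<in> PiE e W \<Longrightarrow> 0 \<le> \<nu> x"
  shows "0 \<le> dual_majorant \<nu> P i Z k"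
  unfolding dual_majorant_def
  by (intro avg_nonneg prod_nonneg add_nonneg_nonneg zero_le_one assms(3)
      stack_point_const_stack_in[OF assms(1) _ assms(2)])

text \<open>Expanding the product of the factors \<nu> + 1; the vertex \<omega> \<union> S of every factor contains i,
  so y is the only variable at i and the extra average over y0 in the fibre averages is void.\<close>

lemma dual_majorant_eq:
  assumes "P \<subseteq> e" "i \<in> e" "i \<notin> P" "k \<in> K"
  shows "dual_majorant \<nu> P i Z k
       = (\<Sum>nn\<in>Pow {T\<in>Pow e. i \<in> T}. fibre_avg W \<nu> e i nn (base_slice i Z) (mixed_slice P i k Z))"
proof -
  let ?T = "{T\<in>Pow e. i \<in> T}"
  let ?c = "\<lambda>y0 y1 S. \<nu> (cube_pt e ((base_slice i Z)(i := y0)) ((mixed_slice P i k Z)(i := y1)) S)"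
  have Wi: "finite (W i)" "W i \<noteq> {}" using assms(2) finite_W nonempty_W by auto
  have y0: "dual_majorant \<nu> P i Z k = avg (\<lambda>y1. \<Prod>T\<in>?T. ?c y0 y1 T + 1) (W i)" for y0
    unfolding dual_majorant_def
  proof (rule avg_cong)
    fix y
    have "(\<Prod>\<omega>\<in>Pow P. \<Prod>S\<in>{S\<in>Pow (e - P). i \<in> S}. \<nu> (stack_point (Z(i := const_stack y)) (layers \<omega> S (Dual k))) + 1)
        = (\<Prod>\<omega>\<in>Pow P. \<Prod>S\<in>{S\<in>Pow (e - P). i \<in> S}. ?c y0 y (\<omega> \<union> S) + 1)"
      using assms(4) by (intro prod.cong refl) (subst stack_point_const_stack_cube[where P=P], auto)
    then show "(\<Prod>\<omega>\<in>Pow P. \<Prod>S\<in>{S\<in>Pow (e - P). i \<in> S}. \<nu> (stack_point (Z(i := const_stack y)) (layers \<omega> S (Dual k))) + 1)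
        = (\<Prod>T\<in>?T. ?c y0 y T + 1)"
      using prod_Pow_Un[OF assms(1,3), of "\<lambda>T. ?c y0 y T + 1"] by simp
  qed
  have "dual_majorant \<nu> P i Z k = avg (\<lambda>_. dual_majorant \<nu> P i Z k) (W i)"
    using Wi by (simp add: avg_const)
  also have "\<dots> = avg (\<lambda>(y0, y1). \<Prod>T\<in>?T. ?c y0 y1 T + 1) (W i \<times> W i)"
    unfolding avg_Times[OF Wi(1) Wi(1)] by (intro avg_cong) (simp only: prod.case y0[symmetric])
  also have "\<dots> = avg (\<lambda>(y0, y1). \<Sum>nn\<in>Pow ?T. \<Prod>S\<in>Pow e. if S \<in> nn then ?c y0 y1 S else 1) (W i \<times> W i)"
    using finite_e by (subst prod_plus_one_expand[of "Pow e"]) auto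
  finally show ?thesis
    unfolding fibre_avg_def by (simp add: case_prod_unfold avg_sum)
qed

lemma abs_avg_dual_part_le:
  assumes "P \<subseteq> e" "i \<in> e" "i \<notin> P" "Z \<in> PiE e stack"
    and bound: "\<And>k x. k \<in> K \<Longrightarrow> x \<in> PiE e W \<Longrightarrow> \<bar>f k x\<bar> \<le> \<nu> x + 1"
  shows "\<bar>avg (\<lambda>c. dual_part f P i (Z(i := c))) (stack i)\<bar> \<le> (\<Prod>k\<in>K. dual_majorant \<nu> P i Z k)"
proof -
  let ?SS = "{S\<in>Pow (e - P). i \<in> S}"
  have Wi: "finite (W i)" "W i \<noteq> {}" using assms(2) finite_W nonempty_W by auto
  define h where "h k y = (\<Prod>\<omega>\<in>Pow P. \<Prod>S\<in>?SS. f k (stack_point (Z(i := const_stack y)) (layers \<omega> S (Dual k))))"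
    for k y
  have "dual_part f P i (Z(i := c))
      = (\<Prod>\<omega>\<in>Pow P. \<Prod>k\<in>K. \<Prod>S\<in>?SS. f k (stack_point (Z(i := const_stack (snd (snd c) k))) (layers \<omega> S (Dual k))))"
    for c
    unfolding dual_part_def using assms(3)
    by (intro prod.cong refl arg_cong[where f="f _"] stack_point_upd_cong)
       (auto simp: layers_def const_stack_def)
  then have "avg (\<lambda>c. dual_part f P i (Z(i := c))) (stack i)
      = avg (\<lambda>c. \<Prod>k\<in>K. h k (snd (snd c) k)) (stack i)"
    unfolding h_def by (simp add: prod.swap[of _ K])
  also have "\<dots> = (\<Prod>k\<in>K. avg (h k) (W i))"
    using avg_stack_Base_Dual[OF assms(2), of "\<lambda>_. 1" "\<lambda>b. \<Prod>k\<in>K. h k (b k)"] Wi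
    by (simp add: avg_const prod_avg_PiE[OF finite_K])
  finally have eq: "avg (\<lambda>c. dual_part f P i (Z(i := c))) (stack i) = (\<Prod>k\<in>K. avg (h k) (W i))" .
  have "\<bar>avg (h k) (W i)\<bar> \<le> dual_majorant \<nu> P i Z k" if k: "k \<in> K" for k
  proof -
    have "\<bar>avg (h k) (W i)\<bar> \<le> avg (\<lambda>y. \<bar>h k y\<bar>) (W i)" by (rule abs_avg_le)
    also have "\<dots> \<le> dual_majorant \<nu> P i Z k"
      unfolding dual_majorant_def h_def abs_prod
      by (intro avg_mono prod_mono conjI prod_nonneg ballI abs_ge_zero bound[OF k]
          stack_point_const_stack_in[OF assms(4) _ k])
    finally show ?thesis .
  qed
  then show ?thesis
    unfolding eq abs_prod by (intro prod_mono) auto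
qed

lemma avg_slices:
  assumes "k \<in> K" "i \<in> e"
  shows "avg (\<lambda>Z. H (base_slice i Z) (mixed_slice P i k Z)) (PiE e stack)
       = avg (\<lambda>(x0, x1). H x0 x1) (PiE (e - {i}) W \<times> PiE (e - {i}) W)"
proof -
  define A where "A = e - {i}"
  define \<pi> where "\<pi> j c = (fst c, if j \<in> P then fst (snd c) else snd (snd c) k)"
    for j and c :: "'v \<times> 'v \<times> ('k \<Rightarrow> 'v)"
  define G where "G u = H (restrict (\<lambda>j. fst (u j)) A) (restrict (\<lambda>j. snd (u j)) A)" for u
  have "avg (\<lambda>Z. H (base_slice i Z) (mixed_slice P i k Z)) (PiE e stack)
      = avg (\<lambda>Z. (\<lambda>Z'. G (restrict (\<lambda>j. \<pi> j (Z' j)) A)) (restrict Z (e - {i}))) (PiE e stack)"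
    by (intro avg_cong) (simp add: G_def base_slice_def mixed_slice_def \<pi>_def A_def restrict_def cong: if_cong)
  also have "\<dots> = avg (\<lambda>Z'. G (restrict (\<lambda>j. \<pi> j (Z' j)) A)) (PiE A stack)"
    unfolding A_def using assms(2) finite_e finite_stack stack_nonempty by (intro avg_PiE_remove) auto
  also have "\<dots> = avg G (PiE A (\<lambda>j. W j \<times> W j))"
  proof (rule avg_PiE_map)
    show "finite A" using finite_e A_def by simp
    show "\<And>j. j \<in> A \<Longrightarrow> finite (stack j) \<and> finite (W j \<times> W j)"
      using finite_stack finite_W A_def by auto
    fix j G' assume j: "j \<in> A"
    have Wj: "finite (W j)" "W j \<noteq> {}" "finite (PiE K (\<lambda>_. W j))" "PiE K (\<lambda>_. W j) \<noteq> {}"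
      using j A_def finite_W nonempty_W finite_PiE_dual PiE_dual_nonempty by auto
    have "avg (\<lambda>b. avg (\<lambda>y. G' (\<pi> j (a, b, y))) (PiE K (\<lambda>_. W j))) (W j) = avg (\<lambda>b. G' (a, b)) (W j)"
      for a
    proof (cases "j \<in> P")
      case False
      then show ?thesis
        using Wj avg_PiE_coordinate[OF assms(1) finite_K Wj(1), of "\<lambda>t. G' (a, t)"]
        by (simp add: \<pi>_def avg_const)
    qed (use Wj in \<open>simp add: \<pi>_def avg_const\<close>)
    then show "avg (\<lambda>c. G' (\<pi> j c)) (stack j) = avg G' (W j \<times> W j)"
      unfolding stack_def using Wj by (simp add: avg_Times)
  qed
  also have "\<dots> = avg (\<lambda>(x0, x1). H x0 x1) (PiE A W \<times> PiE A W)"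
    unfolding G_def by (rule avg_PiE_zip)
  finally show ?thesis unfolding A_def .
qed

lemma dual_weight_le_moments:
  assumes "P \<subseteq> e" "i \<in> e" "i \<notin> P"
    and nonneg: "\<And>x. x \<in> PiE e W \<Longrightarrow> 0 \<le> \<nu> x"
    and bound: "\<And>k x. k \<in> K \<Longrightarrow> x \<in> PiE e W \<Longrightarrow> \<bar>f k x\<bar> \<le> \<nu> x + 1"
  shows "dual_weight f P i
     \<le> 1 + (\<Sum>k\<in>K. real (card (Pow {T\<in>Pow e. i \<in> T})) ^ (2 * card K) *
           (\<Sum>nn\<in>Pow {T\<in>Pow e. i \<in> T}. avg (\<lambda>(x0, x1). (fibre_avg W \<nu> e i nn x0 x1) ^ (2 * card K))
              (PiE (e - {i}) W \<times> PiE (e - {i}) W)))"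
proof -
  let ?T = "Pow {T\<in>Pow e. i \<in> T}"
  let ?m = "2 * card K"
  let ?c = "real (card ?T) ^ ?m"
  let ?F = "\<lambda>nn x0 x1. (fibre_avg W \<nu> e i nn x0 x1) ^ ?m"
  have pointwise: "(avg (\<lambda>c. dual_part f P i (Z(i := c))) (stack i))\<^sup>2
      \<le> 1 + (\<Sum>k\<in>K. ?c * (\<Sum>nn\<in>?T. ?F nn (base_slice i Z) (mixed_slice P i k Z)))"
    if Z: "Z \<in> PiE e stack" for Z
  proof -
    have majorant_nonneg: "0 \<le> dual_majorant \<nu> P i Z k" if "k \<in> K" for k
      using Z that nonneg by (rule dual_majorant_nonneg)
    have "(avg (\<lambda>c. dual_part f P i (Z(i := c))) (stack i))\<^sup>2 \<le> (\<Prod>k\<in>K. dual_majorant \<nu> P i Z k)\<^sup>2"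
      using abs_avg_dual_part_le[OF assms(1-3) Z bound] by (simp add: power2_le_iff_abs_le
          prod_nonneg majorant_nonneg)
    also have "\<dots> \<le> 1 + (\<Sum>k\<in>K. (dual_majorant \<nu> P i Z k) ^ ?m)"
      unfolding prod_power_distrib using finite_K majorant_nonneg by (rule prod_power2_le)
    also have "\<dots> \<le> 1 + (\<Sum>k\<in>K. ?c * (\<Sum>nn\<in>?T. ?F nn (base_slice i Z) (mixed_slice P i k Z)))"
      using finite_e assms Z
      by (intro add_left_mono sum_mono)
        (auto simp: dual_majorant_eq intro!: power_sum_le fibre_avg_nonneg base_slice_in mixed_slice_in nonneg)
    finally show ?thesis .
  qed
  have "dual_weight f P i
      \<le> avg (\<lambda>Z. 1 + (\<Sum>k\<in>K. ?c * (\<Sum>nn\<in>?T. ?F nn (base_slice i Z) (mixed_slice P i k Z)))) (PiE e stack)"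
    unfolding dual_weight_def by (rule avg_mono) (rule pointwise)
  also have "\<dots> = 1 + (\<Sum>k\<in>K. ?c * (\<Sum>nn\<in>?T. avg (\<lambda>Z. ?F nn (base_slice i Z) (mixed_slice P i k Z)) (PiE e stack)))"
    using finite_PiE_stack PiE_stack_nonempty by (simp add: avg_add avg_const avg_sum avg_mult_left)
  also have "\<dots> = 1 + (\<Sum>k\<in>K. ?c * (\<Sum>nn\<in>?T. avg (\<lambda>(x0, x1). ?F nn x0 x1) (PiE (e - {i}) W \<times> PiE (e - {i}) W)))"
    by (intro arg_cong2[where f="(+)"] refl sum.cong arg_cong2[where f="(*)"]
        avg_slices[OF _ assms(2), where H="\<lambda>x0 x1. ?F _ x0 x1"])
  finally show ?thesis .
qed

lemma dual_weight_le:
  assumes "P \<subseteq> e" "i \<in> e" "i \<notin> P" "0 \<le> C"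
    and nonneg: "\<And>x. x \<in> PiE e W \<Longrightarrow> 0 \<le> \<nu> x"
    and bound: "\<And>k x. k \<in> K \<Longrightarrow> x \<in> PiE e W \<Longrightarrow> \<bar>f k x\<bar> \<le> \<nu> x + 1"
    and moments: "\<And>nn. nn \<subseteq> Pow e \<Longrightarrow>
      avg (\<lambda>(x0, x1). fibre_avg W \<nu> e i nn x0 x1 ^ (2 * card K)) (PiE (e - {i}) W \<times> PiE (e - {i}) W) \<le> C"
  shows "dual_weight f P i \<le> 1 + real (card K) * real (card (Pow (Pow e))) ^ (2 * card K + 1) * C"
proof -
  let ?T = "Pow {T\<in>Pow e. i \<in> T}"
  let ?M = "real (card (Pow (Pow e)))"
  let ?F = "\<lambda>nn. avg (\<lambda>(x0, x1). fibre_avg W \<nu> e i nn x0 x1 ^ (2 * card K)) (PiE (e - {i}) W \<times> PiE (e - {i}) W)"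
  have card: "real (card ?T) \<le> ?M" using finite_e by (intro of_nat_mono card_mono) auto
  have "real (card ?T) ^ (2 * card K) * (\<Sum>nn\<in>?T. ?F nn) \<le> real (card ?T) ^ (2 * card K) * (real (card ?T) * C)"
    using moments by (intro mult_left_mono sum_bounded_above) auto
  also have "\<dots> \<le> ?M ^ (2 * card K) * (?M * C)"
    using card assms(4) by (intro mult_mono power_mono mult_right_mono) auto
  also have "\<dots> = ?M ^ (2 * card K + 1) * C"
    by (simp add: mult_ac)
  finally have "(\<Sum>k\<in>K. real (card ?T) ^ (2 * card K) * (\<Sum>nn\<in>?T. ?F nn))
      \<le> real (card K) * (?M ^ (2 * card K + 1) * C)"
    by (intro sum_bounded_above)
  from order_trans[OF dual_weight_le_moments[OF assms(1-3) nonneg bound] add_left_mono[OF this]]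
  show ?thesis by (simp only: mult.assoc)
qed

theorem correlation_power_le:
  assumes "0 \<le> C"
    and nonneg: "\<And>x. x \<in> PiE e W \<Longrightarrow> 0 \<le> \<nu> x"
    and bound: "\<And>k x. k \<in> K \<Longrightarrow> x \<in> PiE e W \<Longrightarrow> \<bar>f k x\<bar> \<le> \<nu> x + 1"
    and moments: "\<And>i nn. i \<in> e \<Longrightarrow> nn \<subseteq> Pow e \<Longrightarrow>
      avg (\<lambda>(x0, x1). fibre_avg W \<nu> e i nn x0 x1 ^ (2 * card K)) (PiE (e - {i}) W \<times> PiE (e - {i}) W) \<le> C"
  shows "\<bar>avg (\<lambda>x. (\<nu> x - 1) * (\<Prod>k\<in>K. avg (\<lambda>x1. \<Prod>S\<in>Pow e - {{}}. f k (cube_pt e x x1 S)) (PiE e W)))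
            (PiE e W)\<bar> ^ 2 ^ card e
    \<le> (1 + real (card K) * real (card (Pow (Pow e))) ^ (2 * card K + 1) * C) ^ 2 ^ card e
      * \<bar>avg (\<lambda>(x0, x1). \<Prod>\<omega>\<in>Pow e. \<nu> (cube_pt e x0 x1 \<omega>) - 1) (PiE e W \<times> PiE e W)\<bar>"
proof -
  let ?g = "\<lambda>x. \<nu> x - 1"
  let ?C = "1 + real (card K) * real (card (Pow (Pow e))) ^ (2 * card K + 1) * C"
  have "\<bar>mixed_avg ?g f {}\<bar> ^ 2 ^ card (e - {}) \<le> ?C ^ 2 ^ card (e - {}) * \<bar>mixed_avg ?g f e\<bar>"
  proof (rule mixed_avg_power_le)
    show "1 \<le> ?C" using assms(1) by simp
    show "dual_weight f P i \<le> ?C" if "P \<subseteq> e" "i \<in> e" "i \<notin> P" for P i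
      using that assms(1) nonneg bound moments[OF that(2)] by (rule dual_weight_le)
  qed simp
  then show ?thesis by (simp add: mixed_avg_empty mixed_avg_full)
qed

end

section \<open>Asymptotics\<close>

lemma hypergraph_system_edge:
  assumes "hypergraph_system J V d H" "e \<in> H"
  shows "e \<subseteq> J" "finite e" "card e = d"
proof -
  show "e \<subseteq> J" "card e = d" using assms unfolding hypergraph_system_def by auto
  then show "finite e" using assms(1) unfolding hypergraph_system_def by (auto intro: finite_subset)
qed

lemma cube_pt_restrict: "cube_pt e x0 x1 S = cube_pt e (restrict x0 e) (restrict x1 e) S"
  unfolding cube_pt_def by (auto simp: restrict_def fun_eq_iff)

lemma cube_avg_tendsto_one:
  assumes "hypergraph_system J V d H" "pseudorandom J V H \<nu>" "e \<in> H"
  shows "(\<lambda>N. avg (\<lambda>(x0, x1). \<Prod>S\<in>Pow e. if S \<in> nn then \<nu> N e (cube_pt e x0 x1 S) else 1)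
            (PiE e (V N) \<times> PiE e (V N))) \<longlonglongrightarrow> 1"
proof -
  have J: "finite J" "H \<subseteq> Pow J" and V: "\<And>N j. j \<in> J \<Longrightarrow> finite (V N j) \<and> V N j \<noteq> {}"
    using assms(1) unfolding hypergraph_system_def by auto
  have H: "finite H" using finite_subset[OF J(2)] J(1) by simp
  note ii = assms(2)[unfolded pseudorandom_def, THEN conjunct2, THEN conjunct2, THEN conjunct1]
  define n where "n e' S = (e' = e \<and> S \<in> nn)" for e' S
  have "(\<Prod>e'\<in>H. \<Prod>S\<in>Pow e'. if n e' S then \<nu> N e' (cube_pt e' x0 x1 S) else 1)
      = (\<Prod>S\<in>Pow e. if S \<in> nn then \<nu> N e (cube_pt e (restrict x0 e) (restrict x1 e) S) else 1)"
    for N x0 x1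
  proof -
    have "(\<Prod>e'\<in>H - {e}. \<Prod>S\<in>Pow e'. if n e' S then \<nu> N e' (cube_pt e' x0 x1 S) else 1) = 1"
      by (rule prod.neutral) (auto simp: n_def)
    then show ?thesis
      unfolding prod.remove[OF H assms(3)] by (simp add: n_def cube_pt_restrict[of e x0 x1] cong: if_cong)
  qed
  then have "avg (\<lambda>(x0, x1). \<Prod>e'\<in>H. \<Prod>S\<in>Pow e'. if n e' S then \<nu> N e' (cube_pt e' x0 x1 S) else 1)
      (PiE J (V N) \<times> PiE J (V N))
    = avg (\<lambda>(x0, x1). \<Prod>S\<in>Pow e. if S \<in> nn then \<nu> N e (cube_pt e x0 x1 S) else 1)
      (PiE e (V N) \<times> PiE e (V N))" for N
    by (simp add: case_prod_unfold avg_PiE_Times_restrict[OF J(1) hypergraph_system_edge(1)[OF assms(1,3)] V,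
          where G="\<lambda>y0 y1. \<Prod>S\<in>Pow e. if S \<in> nn then \<nu> N e (cube_pt e y0 y1 S) else 1",
          simplified case_prod_unfold])
  with ii[rule_format, of n] show ?thesis by simp
qed

lemma box_avg_tendsto_zero:
  assumes "hypergraph_system J V d H" "pseudorandom J V H \<nu>" "e \<in> H"
  shows "(\<lambda>N. avg (\<lambda>(x0, x1). \<Prod>\<omega>\<in>Pow e. \<nu> N e (cube_pt e x0 x1 \<omega>) - 1)
            (PiE e (V N) \<times> PiE e (V N))) \<longlonglongrightarrow> 0"
proof -
  have "finite e" using hypergraph_system_edge[OF assms(1,3)] by simp
  let ?B = "\<lambda>nn N. avg (\<lambda>(x0, x1). \<Prod>S\<in>Pow e. if S \<in> nn then \<nu> N e (cube_pt e x0 x1 S) else 1)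
    (PiE e (V N) \<times> PiE e (V N))"
  have expand: "avg (\<lambda>(x0, x1). \<Prod>\<omega>\<in>Pow e. \<nu> N e (cube_pt e x0 x1 \<omega>) - 1) (PiE e (V N) \<times> PiE e (V N))
      = (\<Sum>nn\<in>Pow (Pow e). (-1) ^ card (Pow e - nn) * ?B nn N)" for N
    using \<open>finite e\<close> by (simp add: prod_minus_one_expand case_prod_unfold avg_sum avg_mult_left)
  have "(\<lambda>N. \<Sum>nn\<in>Pow (Pow e). (-1) ^ card (Pow e - nn) * ?B nn N)
      \<longlonglongrightarrow> (\<Sum>nn\<in>Pow (Pow e). (-1) ^ card (Pow e - nn) * 1)"
    by (intro tendsto_sum tendsto_mult_left cube_avg_tendsto_one[OF assms])
  also have "(\<Sum>nn\<in>Pow (Pow e). (-1) ^ card (Pow e - nn) * 1) = (\<Prod>\<omega>\<in>Pow e. 1 - 1 :: real)"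
    using prod_minus_one_expand[of "Pow e" "\<lambda>_. 1 :: real"] \<open>finite e\<close> by simp
  also have "\<dots> = 0"
    using \<open>finite e\<close> by (simp add: card_Pow)
  finally show ?thesis unfolding expand .
qed

lemma eventually_uniform_bound_finite:
  fixes Q :: "'a \<Rightarrow> 'b \<Rightarrow> real"
  assumes "finite A" "\<forall>a\<in>A. \<exists>C. eventually (\<lambda>N. Q a N \<le> C) F"
  shows "\<exists>C. eventually (\<lambda>N. \<forall>a\<in>A. Q a N \<le> C) F"
  using assms
proof (induction A rule: finite_induct)
  case (insert a A)
  then obtain C1 C2 where "eventually (\<lambda>N. Q a N \<le> C1) F" "eventually (\<lambda>N. \<forall>a\<in>A. Q a N \<le> C2) F"
    by auto
  then have "eventually (\<lambda>N. \<forall>b\<in>insert a A. Q b N \<le> max C1 C2) F"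
    by eventually_elim auto
  then show ?case by blast
qed simp

lemma moments_eventually_bounded:
  assumes "pseudorandom J V H \<nu>" "e \<in> H" "finite e"
  shows "\<exists>C. \<forall>\<^sub>F N in sequentially. \<forall>i\<in>e. \<forall>nn\<in>Pow (Pow e).
    avg (\<lambda>(x0, x1). fibre_avg (V N) (\<nu> N e) e i nn x0 x1 ^ p)
      (PiE (e - {i}) (V N) \<times> PiE (e - {i}) (V N)) \<le> C"
proof -
  note iii = assms(1)[unfolded pseudorandom_def, THEN conjunct2, THEN conjunct2, THEN conjunct2]
  define Q where "Q q N = avg (\<lambda>(x0, x1). fibre_avg (V N) (\<nu> N e) e (fst q) (snd q) x0 x1 ^ p)
      (PiE (e - {fst q}) (V N) \<times> PiE (e - {fst q}) (V N))" for q N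
  have "\<exists>C. \<forall>\<^sub>F N in sequentially. Q q N \<le> C" if q: "q \<in> e \<times> Pow (Pow e)" for q
  proof -
    obtain C where "\<forall>\<^sub>F N in sequentially. \<bar>Q q N\<bar> \<le> C"
      using iii[rule_format, OF assms(2), of "fst q" "\<lambda>S. S \<in> snd q" p] q
      unfolding Q_def fibre_avg_def by auto
    then have "\<forall>\<^sub>F N in sequentially. Q q N \<le> C"
      by (rule eventually_mono) (rule abs_le_D1)
    then show ?thesis by blast
  qed
  then have "\<exists>C. \<forall>\<^sub>F N in sequentially. \<forall>q\<in>e \<times> Pow (Pow e). Q q N \<le> C"
    using assms(3) by (intro eventually_uniform_bound_finite) auto
  then obtain C where "\<forall>\<^sub>F N in sequentially. \<forall>q\<in>e \<times> Pow (Pow e). Q q N \<le> C"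
    by blast
  then have "\<forall>\<^sub>F N in sequentially. \<forall>i\<in>e. \<forall>nn\<in>Pow (Pow e). Q (i, nn) N \<le> C"
    by (rule eventually_mono) auto
  then show ?thesis unfolding Q_def by auto
qed

lemma correlation_le_of_small_box:
  assumes "hypergraph_system J V d H" "pseudorandom J V H \<nu>" "e \<in> H" "0 < \<epsilon>"
    and moments: "\<forall>i\<in>e. \<forall>nn\<in>Pow (Pow e). avg (\<lambda>(x0, x1). fibre_avg (V N) (\<nu> N e) e i nn x0 x1 ^ (2 * m))
      (PiE (e - {i}) (V N) \<times> PiE (e - {i}) (V N)) \<le> C"
    and small: "\<bar>avg (\<lambda>(x0, x1). \<Prod>\<omega>\<in>Pow e. \<nu> N e (cube_pt e x0 x1 \<omega>) - 1) (PiE e (V N) \<times> PiE e (V N))\<bar>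
      < (\<epsilon> / (1 + real m * real (card (Pow (Pow e))) ^ (2 * m + 1) * max C 0)) ^ 2 ^ d"
  shows "\<forall>(K :: 'k set) (f :: 'k \<Rightarrow> ('j \<Rightarrow> 'v) \<Rightarrow> real).
           finite K \<and> card K = m \<and> (\<forall>k\<in>K. \<forall>x\<in>PiE e (V N). \<bar>f k x\<bar> \<le> \<nu> N e x + 1) \<longrightarrow>
           \<bar>avg (\<lambda>x. (\<nu> N e x - 1) * (\<Prod>k\<in>K. dual_fn V N e (f k) x)) (PiE e (V N))\<bar> \<le> \<epsilon>"
proof (intro allI impI, elim conjE)
  fix K :: "'k set" and f :: "'k \<Rightarrow> ('j \<Rightarrow> 'v) \<Rightarrow> real"
  assume K: "finite K" "card K = m" and bound: "\<forall>k\<in>K. \<forall>x\<in>PiE e (V N). \<bar>f k x\<bar> \<le> \<nu> N e x + 1"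
  note e = hypergraph_system_edge[OF assms(1,3)]
  interpret stacked_cube e K "V N"
    using assms(1) e(1,2) K(1) unfolding hypergraph_system_def by unfold_locales auto
  have nonneg: "\<And>x. x \<in> PiE e (V N) \<Longrightarrow> 0 \<le> \<nu> N e x"
    using assms(2,3) unfolding pseudorandom_def system_of_measures_def by blast
  let ?C = "1 + real m * real (card (Pow (Pow e))) ^ (2 * m + 1) * max C 0"
  let ?t = "avg (\<lambda>x. (\<nu> N e x - 1) * (\<Prod>k\<in>K. dual_fn V N e (f k) x)) (PiE e (V N))"
  have "?C > 0" by (simp add: add_pos_nonneg)
  have "\<bar>?t\<bar> ^ 2 ^ d \<le> ?C ^ 2 ^ d
      * \<bar>avg (\<lambda>(x0, x1). \<Prod>\<omega>\<in>Pow e. \<nu> N e (cube_pt e x0 x1 \<omega>) - 1) (PiE e (V N) \<times> PiE e (V N))\<bar>"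
    unfolding dual_fn_def e(3)[symmetric] K(2)[symmetric]
    by (rule correlation_power_le) (use nonneg bound moments K(2) in \<open>auto intro: le_max_iff_disj[THEN iffD2]\<close>)
  also have "\<dots> \<le> ?C ^ 2 ^ d * (\<epsilon> / ?C) ^ 2 ^ d"
    using small \<open>?C > 0\<close> by (intro mult_left_mono) auto
  also have "\<dots> = \<epsilon> ^ 2 ^ d"
    using \<open>?C > 0\<close> by (simp add: power_divide)
  finally show "\<bar>?t\<bar> \<le> \<epsilon>"
    using \<open>0 < \<epsilon>\<close> by (simp add: power_mono_iff)
qed

theorem mainTheorem11:
  fixes J :: "'j set" and V :: "nat \<Rightarrow> 'j \<Rightarrow> 'v set" and d :: nat
    and H :: "'j set set" and \<nu> :: "nat \<Rightarrow> 'j set \<Rightarrow> ('j \<Rightarrow> 'v) \<Rightarrow> real"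
    and e :: "'j set"
  assumes "hypergraph_system J V d H"
    and "pseudorandom J V H \<nu>"
    and "e \<in> H"
  shows "\<forall>m :: nat. \<forall>\<epsilon> > 0. \<forall>\<^sub>F N in sequentially.
           \<forall>(K :: 'k set) (f :: 'k \<Rightarrow> ('j \<Rightarrow> 'v) \<Rightarrow> real).
             finite K \<and> card K = m \<and>
             (\<forall>k\<in>K. \<forall>x\<in>PiE e (V N). \<bar>f k x\<bar> \<le> \<nu> N e x + 1) \<longrightarrow>
             \<bar>avg (\<lambda>x. (\<nu> N e x - 1) * (\<Prod>k\<in>K. dual_fn V N e (f k) x)) (PiE e (V N))\<bar> \<le> \<epsilon>"
proof (intro allI impI)
  fix m :: nat and \<epsilon> :: real
  assume "\<epsilon> > 0"
  note e = hypergraph_system_edge[OF assms(1,3)]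
  obtain C where moments: "\<forall>\<^sub>F N in sequentially. \<forall>i\<in>e. \<forall>nn\<in>Pow (Pow e).
      avg (\<lambda>(x0, x1). fibre_avg (V N) (\<nu> N e) e i nn x0 x1 ^ (2 * m))
        (PiE (e - {i}) (V N) \<times> PiE (e - {i}) (V N)) \<le> C"
    using moments_eventually_bounded[OF assms(2,3) e(2)] by blast
  define Cw where "Cw = 1 + real m * real (card (Pow (Pow e))) ^ (2 * m + 1) * max C 0"
  have "Cw > 0" unfolding Cw_def by (simp add: add_pos_nonneg)
  then have "\<forall>\<^sub>F N in sequentially. \<bar>avg (\<lambda>(x0, x1). \<Prod>\<omega>\<in>Pow e. \<nu> N e (cube_pt e x0 x1 \<omega>) - 1)
      (PiE e (V N) \<times> PiE e (V N))\<bar> < (\<epsilon> / Cw) ^ 2 ^ d"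
    using order_tendstoD(2)[OF tendsto_rabs_zero[OF box_avg_tendsto_zero[OF assms]]] \<open>\<epsilon> > 0\<close> by simp
  with moments show "\<forall>\<^sub>F N in sequentially. \<forall>(K :: 'k set) (f :: 'k \<Rightarrow> ('j \<Rightarrow> 'v) \<Rightarrow> real).
      finite K \<and> card K = m \<and> (\<forall>k\<in>K. \<forall>x\<in>PiE e (V N). \<bar>f k x\<bar> \<le> \<nu> N e x + 1) \<longrightarrow>
      \<bar>avg (\<lambda>x. (\<nu> N e x - 1) * (\<Prod>k\<in>K. dual_fn V N e (f k) x)) (PiE e (V N))\<bar> \<le> \<epsilon>"
    unfolding Cw_def by eventually_elim (rule correlation_le_of_small_box[OF assms \<open>\<epsilon> > 0\<close>])
qed

end
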